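(* Let $A$ and $B$ be C$^*$-algebras, where $A$ is unital with unit $1$. Suppose $T:A\to B$ is a linear map such that for all $a,b\in A$, $ab^*=1$ implies $T(a)T(b)^*=T(1)$. Then $T(1)$ is a projection in $B$. Consequently, the same conclusion holds when $T$ is a $^*$-homomorphism at the unit of $A$.
   Context: A map $T:A\to B$ between C$^*$-algebras is a $^*$-homomorphism at $z\in A$ if for all $a,b\in A$ with $ab^*=z$ one has $T(ab^* )=T(a)T(b)^*=T(z)$, and for all $c,d\in A$ with $c^*d=z$ one has $T(c^*d)=T(c)^*T(d)=T(z)$. A projection is an element $p$ with $p=p^*=p^2$. *)

theory Defs
  imports "HOL-Analysis.Analysis"
begin

definition cstar_algebra ::
  "(complex \<Rightarrow> 'a::{banach, real_normed_algebra} \<Rightarrow> 'a) \<Rightarrow> ('a \<Rightarrow> 'a) \<Rightarrow> bool" where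
  "cstar_algebra sc st \<longleftrightarrow>
     (\<forall>r x. sc (complex_of_real r) x = scaleR r x) \<and>
     (\<forall>c d x. sc (c * d) x = sc c (sc d x)) \<and>
     (\<forall>c d x. sc (c + d) x = sc c x + sc d x) \<and>
     (\<forall>c x y. sc c (x + y) = sc c x + sc c y) \<and>
     (\<forall>c x y. sc c (x * y) = sc c x * y) \<and>
     (\<forall>c x y. sc c (x * y) = x * sc c y) \<and>
     (\<forall>c x. norm (sc c x) = cmod c * norm x) \<and>
     (\<forall>x y. st (x + y) = st x + st y) \<and>
     (\<forall>c x. st (sc c x) = sc (cnj c) (st x)) \<and>
     (\<forall>x y. st (x * y) = st y * st x) \<and>
     (\<forall>x. st (st x) = x) \<and>
     (\<forall>x. norm (st x * x) = (norm x)\<^sup>2)"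

definition complex_linear ::
  "(complex \<Rightarrow> 'a \<Rightarrow> 'a) \<Rightarrow> (complex \<Rightarrow> 'b \<Rightarrow> 'b) \<Rightarrow> ('a::plus \<Rightarrow> 'b::plus) \<Rightarrow> bool" where
  "complex_linear scA scB T \<longleftrightarrow>
     (\<forall>x y. T (x + y) = T x + T y) \<and> (\<forall>c x. T (scA c x) = scB c (T x))"

definition star_hom_at ::
  "('a::times \<Rightarrow> 'a) \<Rightarrow> ('b::times \<Rightarrow> 'b) \<Rightarrow> ('a \<Rightarrow> 'b) \<Rightarrow> 'a \<Rightarrow> bool" where
  "star_hom_at stA stB T z \<longleftrightarrow>
     (\<forall>a b. a * stA b = z \<longrightarrow> T a * stB (T b) = T z) \<and>
     (\<forall>c d. stA c * d = z \<longrightarrow> stB (T c) * T d = T z)"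

definition is_projection :: "('b::times \<Rightarrow> 'b) \<Rightarrow> 'b \<Rightarrow> bool" where
  "is_projection st p \<longleftrightarrow> p = st p \<and> p = p * p"

end

theory Submission
  imports Defs
begin

text \<open>Taking \<open>a = b = 1\<close> gives \<open>p p\<^sup>* = p\<close> for \<open>p = T 1\<close>; applying the involution
  shows \<open>p\<^sup>* = p p\<^sup>* = p\<close>, so \<open>p = p p\<close>.\<close>

lemma star_one_eq_one:
  fixes st :: "'a::monoid_mult \<Rightarrow> 'a"
  assumes "\<And>x y. st (x * y) = st y * st x" and "\<And>x. st (st x) = x"
  shows "st 1 = 1"
  by (metis assms mult_1_left mult_1_right)

lemma is_projection_if_mult_star_eq:
  fixes st :: "'b::times \<Rightarrow> 'b"
  assumes "\<And>x y. st (x * y) = st y * st x" and "\<And>x. st (st x) = x"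
    and "p * st p = p"
  shows "is_projection st p"
proof -
  have "st p = st (p * st p)" using assms(3) by simp
  also have "\<dots> = p * st p" using assms(1,2) by simp
  finally have "st p = p" using assms(3) by simp
  then show ?thesis using assms(3) unfolding is_projection_def by simp
qed

theorem lemma2p3:
  fixes scA :: "complex \<Rightarrow> 'a::{banach, real_normed_algebra_1} \<Rightarrow> 'a"
    and stA :: "'a \<Rightarrow> 'a"
    and scB :: "complex \<Rightarrow> 'b::{banach, real_normed_algebra} \<Rightarrow> 'b"
    and stB :: "'b \<Rightarrow> 'b"
    and T :: "'a \<Rightarrow> 'b"
  assumes "cstar_algebra scA stA"
    and "cstar_algebra scB stB"
    and "complex_linear scA scB T"
  shows "((\<forall>a b. a * stA b = 1 \<longrightarrow> T a * stB (T b) = T 1) \<longrightarrow> is_projection stB (T 1))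
       \<and> (star_hom_at stA stB T 1 \<longrightarrow> is_projection stB (T 1))"
proof -
  have "stA 1 = 1"
    using assms(1) by (intro star_one_eq_one) (auto simp: cstar_algebra_def)
  then have "is_projection stB (T 1)"
    if "\<forall>a b. a * stA b = 1 \<longrightarrow> T a * stB (T b) = T 1"
    using that assms(2)
    by (intro is_projection_if_mult_star_eq) (auto simp: cstar_algebra_def)
  then show ?thesis unfolding star_hom_at_def by blast
qed

end
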